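(* Let $\lambda\supseteq\mu$ be partitions and $T$ a Dyck tiling of $\lambda\setminus\mu$. Then: (1) $T$ is left-cover-expansive if and only if for every tile $t$ of $T$, $\mathtt{NW}(\operatorname{st}t)\notin\lambda\setminus\mu$; (2) $T$ is right-cover-expansive if and only if for every tile $t$ of $T$, $\mathtt{NE}(\operatorname{en}t)\notin\lambda\setminus\mu$.
   Context: Partitions are identified with Young diagrams $\{(a,b)\in\mathbb N^2:b\le\lambda_a\}$; nodes are elements of $\mathbb N^2$; $(a,b)$ has height $a+b$ and lies in column $b-a$ (smaller column = further left). $\mathtt{NE}(\mathfrak n)=\mathfrak n+(0,1)$, $\mathtt{SW}(\mathfrak n)=\mathfrak n-(0,1)$, $\mathtt{NW}(\mathfrak n)=\mathfrak n+(1,0)$, $\mathtt{SE}(\mathfrak n)=\mathfrak n-(1,0)$. A tile is a finite nonempty set of nodes orderable $\mathfrak n_1,\dots,\mathfrak n_r$ with $\mathfrak n_{i+1}\in\{\mathtt{NE}(\mathfrak n_i),\mathtt{SE}(\mathfrak n_i)\}$; $\operatorname{st}t$ is its leftmost node and $\operatorname{en}t$ its rightmost node; it is a Dyck tile if $\operatorname{st}t,\operatorname{en}t$ both attain the maximal height of nodes of $t$. A Dyck tiling of $\lambda\setminus\mu$ is a partition of $\lambda\setminus\mu$ into Dyck tiles; $\operatorname{tile}(\mathfrak n)$ is the tile containing $\mathfrak n$. The tiling is left-cover-expansive if whenever $\mathfrak a,\mathtt{SE}(\mathfrak a)\in\lambda\setminus\mu$, $\operatorname{st}(\operatorname{tile}(\mathtt{SE}(\mathfrak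 a)))$ lies weakly to the left of $\operatorname{st}(\operatorname{tile}(\mathfrak a))$; right-cover-expansive if whenever $\mathfrak a,\mathtt{SW}(\mathfrak a)\in\lambda\setminus\mu$, $\operatorname{en}(\operatorname{tile}(\mathtt{SW}(\mathfrak a)))$ lies weakly to the right of $\operatorname{en}(\operatorname{tile}(\mathfrak a))$. *)

theory Defs
  imports Main
begin

text \<open>Nodes are pairs of integers (a,b); partitions (Young diagrams) are finite
  down-closed subsets of the positive quadrant {(a,b). a \<ge> 1, b \<ge> 1},
  i.e. {(a,b). 1 \<le> b \<le> lambda_a}.\<close>

type_synonym node = "int \<times> int"

definition is_partition :: "node set \<Rightarrow> bool" where
  "is_partition P \<longleftrightarrow> finite P \<and> P \<subseteq> {(a, b). a \<ge> 1 \<and> b \<ge> 1} \<and>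
     (\<forall>a b a' b'. (a, b) \<in> P \<and> 1 \<le> a' \<and> a' \<le> a \<and> 1 \<le> b' \<and> b' \<le> b \<longrightarrow> (a', b') \<in> P)"

definition height :: "node \<Rightarrow> int" where
  "height n = fst n + snd n"

definition col :: "node \<Rightarrow> int" where
  "col n = snd n - fst n"

definition NE :: "node \<Rightarrow> node" where "NE n = (fst n, snd n + 1)"
definition SW :: "node \<Rightarrow> node" where "SW n = (fst n, snd n - 1)"
definition NW :: "node \<Rightarrow> node" where "NW n = (fst n + 1, snd n)"
definition SE :: "node \<Rightarrow> node" where "SE n = (fst n - 1, snd n)"

definition is_tile :: "node set \<Rightarrow> bool" where
  "is_tile t \<longleftrightarrow> (\<exists>xs. xs \<noteq> [] \<and> set xs = t \<and>
      (\<forall>i. Suc i < length xs \<longrightarrow> xs ! Suc i \<in> {NE (xs ! i), SE (xs ! i)}))"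

text \<open>Leftmost / rightmost node of a tile (columns of nodes of a tile are distinct).\<close>
definition st :: "node set \<Rightarrow> node" where
  "st t = (THE n. n \<in> t \<and> (\<forall>m\<in>t. col n \<le> col m))"

definition en :: "node set \<Rightarrow> node" where
  "en t = (THE n. n \<in> t \<and> (\<forall>m\<in>t. col m \<le> col n))"

definition is_dyck_tile :: "node set \<Rightarrow> bool" where
  "is_dyck_tile t \<longleftrightarrow> is_tile t \<and>
     height (st t) = Max (height ` t) \<and> height (en t) = Max (height ` t)"

definition is_dyck_tiling :: "node set set \<Rightarrow> node set \<Rightarrow> node set \<Rightarrow> bool" where
  "is_dyck_tiling T lam mu \<longleftrightarrow> \<Union>T = lam - mu \<and> (\<forall>t\<in>T. is_dyck_tile t) \<and>
     (\<forall>t\<in>T. \<forall>t'\<in>T. t \<noteq> t' \<longrightarrow> t \<inter> t' = {})"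

definition tile_of :: "node set set \<Rightarrow> node \<Rightarrow> node set" where
  "tile_of T n = (THE t. t \<in> T \<and> n \<in> t)"

definition left_cover_expansive :: "node set set \<Rightarrow> node set \<Rightarrow> node set \<Rightarrow> bool" where
  "left_cover_expansive T lam mu \<longleftrightarrow>
     (\<forall>a. a \<in> lam - mu \<and> SE a \<in> lam - mu \<longrightarrow>
        col (st (tile_of T (SE a))) \<le> col (st (tile_of T a)))"

definition right_cover_expansive :: "node set set \<Rightarrow> node set \<Rightarrow> node set \<Rightarrow> bool" where
  "right_cover_expansive T lam mu \<longleftrightarrow>
     (\<forall>a. a \<in> lam - mu \<and> SW a \<in> lam - mu \<longrightarrow>
        col (en (tile_of T a)) \<le> col (en (tile_of T (SW a))))"

end

theory Submission
  imports Defs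
begin

text \<open>Two disjoint tiles cannot cross: heights of nodes in one column all have the parity of
  the column and change by \<open>\<plusminus>1\<close> per step, so if a node of \<open>t\<close> lies above a node of \<open>s\<close> in
  the same column, this persists in every column to the left in which both tiles have nodes.
  If \<open>a \<in> t\<close> and \<open>SE a \<in> s\<close> with \<open>st s\<close> strictly right of \<open>st t\<close>, and \<open>SE a \<noteq> st s\<close>, then the
  predecessor of \<open>SE a\<close> in \<open>s\<close> lies below \<open>a\<close>; hence some node of \<open>t\<subseteq>\<lambda>\<close> lies above \<open>st s\<close>,
  dominates \<open>NW (st s)\<close> componentwise, and so \<open>NW (st s) \<in> \<lambda>\<setminus>\<mu>\<close>. Conversely, \<open>NW (st t) \<in> \<lambda>\<setminus>\<mu>\<close>
  violates left-cover-expansiveness at \<open>a = NW (st t)\<close>. The right-handed statement is the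
  left-handed one for the transposed tiling.\<close>

lemma col_NE [simp]: "col (NE n) = col n + 1"
  and col_SE [simp]: "col (SE n) = col n + 1"
  and col_NW [simp]: "col (NW n) = col n - 1"
  by (simp_all add: col_def NE_def SE_def NW_def)

lemma col_swap [simp]: "col (prod.swap n) = - col n"
  by (simp add: col_def)

lemma NE_swap: "NE (prod.swap n) = prod.swap (NW n)"
  and SE_swap: "SE (prod.swap n) = prod.swap (SW n)"
  and NW_swap: "NW (prod.swap n) = prod.swap (NE n)"
  by (simp_all add: NE_def SE_def NW_def SW_def)

lemma SE_NW [simp]: "SE (NW n) = n"
  and NW_SE [simp]: "NW (SE n) = n"
  and SW_NE [simp]: "SW (NE n) = n"
  by (simp_all add: NE_def SE_def NW_def SW_def)

lemma step_iff_reverse_step: "m \<in> {NE n, SE n} \<longleftrightarrow> n \<in> {SW m, NW m}"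
  by (cases m; cases n) (auto simp: NE_def SE_def NW_def SW_def)

lemma path_col_nth:
  assumes "\<And>i. Suc i < length xs \<Longrightarrow> xs ! Suc i \<in> {NE (xs ! i), SE (xs ! i)}"
    and "i < length xs"
  shows "col (xs ! i) = col (xs ! 0) + int i"
  using assms(2)
proof (induction i)
  case (Suc i)
  then have "xs ! Suc i \<in> {NE (xs ! i), SE (xs ! i)}" using assms(1) by blast
  then show ?case using Suc by auto
qed simp

lemma st_eqI: "inj_on col t \<Longrightarrow> n \<in> t \<Longrightarrow> (\<And>m. m \<in> t \<Longrightarrow> col n \<le> col m) \<Longrightarrow> st t = n"
  unfolding st_def by (rule the_equality) (blast, meson antisym inj_onD)

lemma en_eqI: "inj_on col t \<Longrightarrow> n \<in> t \<Longrightarrow> (\<And>m. m \<in> t \<Longrightarrow> col m \<le> col n) \<Longrightarrow> en t = n"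
  unfolding en_def by (rule the_equality) (blast, meson antisym inj_onD)

lemma tile_path:
  assumes "is_tile t"
  obtains xs where "xs \<noteq> []" "set xs = t"
    "\<And>i. Suc i < length xs \<Longrightarrow> xs ! Suc i \<in> {NE (xs ! i), SE (xs ! i)}"
    "\<And>i. i < length xs \<Longrightarrow> col (xs ! i) = col (xs ! 0) + int i"
    "inj_on col t" "st t = xs ! 0" "en t = xs ! (length xs - 1)"
proof -
  obtain xs where ne: "xs \<noteq> []" and set: "set xs = t"
    and step: "\<And>i. Suc i < length xs \<Longrightarrow> xs ! Suc i \<in> {NE (xs ! i), SE (xs ! i)}"
    using assms unfolding is_tile_def by blast
  have col: "col (xs ! i) = col (xs ! 0) + int i" if "i < length xs" for i
    using path_col_nth step that by blast
  have index: "\<exists>i < length xs. m = xs ! i" if "m \<in> t" for m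
    using that set by (simp add: in_set_conv_nth eq_commute)
  have inj: "inj_on col t"
  proof (rule inj_onI)
    fix x y assume "x \<in> t" "y \<in> t" and eq: "col x = col y"
    obtain i j where "i < length xs" "j < length xs" "x = xs ! i" "y = xs ! j"
      using index[OF \<open>x \<in> t\<close>] index[OF \<open>y \<in> t\<close>] by blast
    then show "x = y" using col eq by simp
  qed
  have "st t = xs ! 0"
  proof (rule st_eqI[OF inj])
    show "xs ! 0 \<in> t" using ne set by auto
    show "col (xs ! 0) \<le> col m" if "m \<in> t" for m
      using index[OF that] col by auto
  qed
  moreover have "en t = xs ! (length xs - 1)"
  proof (rule en_eqI[OF inj])
    show "xs ! (length xs - 1) \<in> t" using ne set by auto
    show "col m \<le> col (xs ! (length xs - 1))" if m: "m \<in> t" for m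
    proof -
      obtain i where "i < length xs" "m = xs ! i" using index[OF m] by blast
      then show ?thesis using col[of i] col[of "length xs - 1"] ne by simp
    qed
  qed
  ultimately show thesis using that[OF ne set step col inj] by blast
qed

lemma
  assumes "is_tile t"
  shows inj_on_col_tile: "inj_on col t"
    and st_in_tile: "st t \<in> t"
    and en_in_tile: "en t \<in> t"
    and col_st_le: "n \<in> t \<Longrightarrow> col (st t) \<le> col n"
    and col_le_en: "n \<in> t \<Longrightarrow> col n \<le> col (en t)"
proof -
  obtain xs where ne: "xs \<noteq> []" and set: "set xs = t"
    and col: "\<And>i. i < length xs \<Longrightarrow> col (xs ! i) = col (xs ! 0) + int i"
    and inj: "inj_on col t" and st: "st t = xs ! 0" and en: "en t = xs ! (length xs - 1)"
    using tile_path[OF assms] by blast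
  show "inj_on col t" by (fact inj)
  show "st t \<in> t" "en t \<in> t" using ne set st en by auto
  show "col (st t) \<le> col n" "col n \<le> col (en t)" if n: "n \<in> t"
  proof -
    obtain i where "i < length xs" "n = xs ! i" using n set by (auto simp: in_set_conv_nth)
    then show "col (st t) \<le> col n" "col n \<le> col (en t)"
      using col[of i] col[of "length xs - 1"] ne st en by simp_all
  qed
qed

lemma tile_predecessor:
  assumes "is_tile t" "n \<in> t" "n \<noteq> st t"
  obtains m where "m \<in> t" "n \<in> {NE m, SE m}"
proof -
  obtain xs where set: "set xs = t"
    and step: "\<And>i. Suc i < length xs \<Longrightarrow> xs ! Suc i \<in> {NE (xs ! i), SE (xs ! i)}"
    and st: "st t = xs ! 0"
    using tile_path[OF assms(1)] by metis
  obtain i where "i < length xs" "n = xs ! i"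
    using assms(2) set by (metis in_set_conv_nth)
  moreover have "i \<noteq> 0" using assms(3) st calculation by (cases "i = 0") auto
  ultimately show thesis
    using that[of "xs ! (i - 1)"] step[of "i - 1"] set by auto
qed

lemma is_tile_swap:
  assumes "is_tile t"
  shows "is_tile (prod.swap ` t)"
proof -
  obtain xs where "xs \<noteq> []" "set xs = t"
    and step: "\<And>i. Suc i < length xs \<Longrightarrow> xs ! Suc i \<in> {NE (xs ! i), SE (xs ! i)}"
    using assms unfolding is_tile_def by blast
  define ys where "ys = rev (map prod.swap xs)"
  have "ys ! Suc i \<in> {NE (ys ! i), SE (ys ! i)}" if "Suc i < length ys" for i
  proof -
    define j where "j = length xs - Suc (Suc i)"
    have "Suc j < length xs" "ys ! i = prod.swap (xs ! Suc j)" "ys ! Suc i = prod.swap (xs ! j)"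
      using that by (auto simp: ys_def j_def rev_nth Suc_diff_Suc)
    then show ?thesis
      using step[of j] by (auto simp: step_iff_reverse_step NE_swap SE_swap NW_swap)
  qed
  then show ?thesis
    unfolding is_tile_def using \<open>xs \<noteq> []\<close> \<open>set xs = t\<close> by (intro exI[of _ ys]) (auto simp: ys_def)
qed

lemma st_swap_image:
  assumes "is_tile t"
  shows "st (prod.swap ` t) = prod.swap (en t)"
proof (rule st_eqI)
  show "inj_on col (prod.swap ` t)" by (intro inj_on_col_tile is_tile_swap assms)
  show "col (prod.swap (en t)) \<le> col m" if "m \<in> prod.swap ` t" for m
    using that col_le_en[OF assms] by (metis col_swap imageE neg_le_iff_le)
qed (simp add: en_in_tile assms)

definition is_tiling :: "node set set \<Rightarrow> node set \<Rightarrow> bool" where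
  "is_tiling T R \<longleftrightarrow> \<Union>T = R \<and> (\<forall>t\<in>T. is_tile t) \<and> pairwise disjnt T"

lemma is_tiling_if_dyck_tiling: "is_dyck_tiling T lam mu \<Longrightarrow> is_tiling T (lam - mu)"
  unfolding is_dyck_tiling_def is_dyck_tile_def is_tiling_def pairwise_def disjnt_def by blast

lemma
  assumes "is_tiling T R" "t \<in> T"
  shows is_tiling_tile: "is_tile t"
    and is_tiling_subset: "t \<subseteq> R"
    and is_tiling_disjoint: "s \<in> T \<Longrightarrow> s \<noteq> t \<Longrightarrow> t \<inter> s = {}"
  using assms unfolding is_tiling_def pairwise_def disjnt_def by blast+

lemma is_tiling_cover:
  assumes "is_tiling T R" "n \<in> R"
  obtains t where "t \<in> T" "n \<in> t"
  using assms unfolding is_tiling_def by blast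

lemma tile_of_eq: "is_tiling T R \<Longrightarrow> t \<in> T \<Longrightarrow> n \<in> t \<Longrightarrow> tile_of T n = t"
  unfolding tile_of_def by (rule the_equality) (blast dest: is_tiling_disjoint)+

lemma is_tiling_swap:
  assumes "is_tiling T R"
  shows "is_tiling ((`) prod.swap ` T) (prod.swap ` R)"
proof -
  have "pairwise disjnt ((`) prod.swap ` T)"
  proof (rule pairwiseI)
    fix A B assume "A \<in> (`) prod.swap ` T" "B \<in> (`) prod.swap ` T" "A \<noteq> B"
    then obtain t s where "t \<in> T" "s \<in> T" "s \<noteq> t" "A = prod.swap ` t" "B = prod.swap ` s"
      by blast
    then show "disjnt A B"
      using is_tiling_disjoint[OF assms] by (simp add: disjnt_def image_Int[symmetric])
  qed
  then show ?thesis using assms unfolding is_tiling_def by (auto simp: is_tile_swap)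
qed

lemma is_partition_swap: "is_partition P \<Longrightarrow> is_partition (prod.swap ` P)"
  unfolding is_partition_def by (auto 0 4)

lemma partition_down_closed:
  "is_partition P \<Longrightarrow> (a, b) \<in> P \<Longrightarrow> 1 \<le> a' \<Longrightarrow> a' \<le> a \<Longrightarrow> 1 \<le> b' \<Longrightarrow> b' \<le> b \<Longrightarrow> (a', b') \<in> P"
  unfolding is_partition_def by blast

lemma NW_mem_skew_shape:
  assumes lam: "is_partition lam" and mu: "is_partition mu" and "u \<in> lam" "n \<in> lam - mu"
    and "col u = col n" "height n < height u"
  shows "NW n \<in> lam - mu"
proof -
  obtain a b p q where n: "n = (a, b)" and u: "u = (p, q)" by fastforce
  have pos: "1 \<le> a" "1 \<le> b" using lam assms(4) n unfolding is_partition_def by auto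
  have "a + 1 \<le> p" "b \<le> q" using assms(5,6) n u by (simp_all add: col_def height_def)
  then have "(a + 1, b) \<in> lam"
    using partition_down_closed[OF lam] assms(3) u pos by simp
  moreover have "(a + 1, b) \<notin> mu"
    using partition_down_closed[OF mu, of "a + 1" b a b] assms(4) n pos by auto
  ultimately show ?thesis using n by (simp add: NW_def)
qed

lemma height_lt_predecessors:
  assumes "col u = col v" "height v < height u"
    and "u \<in> {NE u0, SE u0}" "v \<in> {NE v0, SE v0}" "u0 \<noteq> v0"
  shows "height v0 < height u0"
  using assms by (cases u0; cases v0) (auto simp: col_def height_def NE_def SE_def)

lemma disjoint_tiles_stay_ordered_leftwards:
  assumes t: "is_tile t" and s: "is_tile s" and disj: "t \<inter> s = {}"
    and "u \<in> t" "v \<in> s" "col u = col v" "height v < height u"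
    and "c \<le> col u" "col (st t) \<le> c" "col (st s) \<le> c"
  shows "\<exists>u'\<in>t. \<exists>v'\<in>s. col u' = c \<and> col v' = c \<and> height v' < height u'"
  using assms(8-10)
proof (induction c rule: int_le_induct)
  case base
  show ?case using assms(4-7) by (metis (no_types))
next
  case (step c)
  then have "\<exists>u'\<in>t. \<exists>v'\<in>s. col u' = c \<and> col v' = c \<and> height v' < height u'"
    by linarith
  then obtain u' v' where uv: "u' \<in> t" "v' \<in> s" "col u' = c" "col v' = c" "height v' < height u'"
    by blast
  have "u' \<noteq> st t" "v' \<noteq> st s" using step.prems uv(3,4) by auto
  then obtain u0 v0 where u0: "u0 \<in> t" "u' \<in> {NE u0, SE u0}" and v0: "v0 \<in> s" "v' \<in> {NE v0, SE v0}"
    using tile_predecessor[OF t uv(1)] tile_predecessor[OF s uv(2)] by metis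
  have "u0 \<noteq> v0" using u0(1) v0(1) disj by blast
  then have "height v0 < height u0"
    using height_lt_predecessors[OF _ uv(5) u0(2) v0(2)] uv(3,4) by simp
  moreover have "col u0 = c - 1" "col v0 = c - 1" using u0(2) v0(2) uv(3,4) by auto
  ultimately show ?case using u0(1) v0(1) by blast
qed

lemma NW_st_notin_if_left_cover_expansive:
  assumes T: "is_tiling T (lam - mu)" and "left_cover_expansive T lam mu" "t \<in> T"
  shows "NW (st t) \<notin> lam - mu"
proof
  assume NW: "NW (st t) \<in> lam - mu"
  then obtain t' where t': "t' \<in> T" "NW (st t) \<in> t'" by (rule is_tiling_cover[OF T])
  have st: "st t \<in> t" using st_in_tile is_tiling_tile[OF T \<open>t \<in> T\<close>] .
  then have "st t \<in> lam - mu" using is_tiling_subset[OF T \<open>t \<in> T\<close>] by blast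
  then have "col (st (tile_of T (st t))) \<le> col (st (tile_of T (NW (st t))))"
    using assms(2) NW unfolding left_cover_expansive_def by (metis SE_NW)
  then have "col (st t) \<le> col (st t')"
    using tile_of_eq[OF T] \<open>t \<in> T\<close> t' st by simp
  moreover have "col (st t') \<le> col (NW (st t))"
    using col_st_le[OF is_tiling_tile[OF T t'(1)] t'(2)] .
  ultimately show False by simp
qed

lemma left_cover_expansive_if_NW_st_notin:
  assumes lam: "is_partition lam" and mu: "is_partition mu" and T: "is_tiling T (lam - mu)"
    and NW: "\<forall>t\<in>T. NW (st t) \<notin> lam - mu"
  shows "left_cover_expansive T lam mu"
  unfolding left_cover_expansive_def
proof (intro allI impI)
  fix a assume a: "a \<in> lam - mu \<and> SE a \<in> lam - mu"
  then obtain t s where t: "t \<in> T" "a \<in> t" and s: "s \<in> T" "SE a \<in> s"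
    by (meson is_tiling_cover[OF T])
  have tile: "is_tile t" "is_tile s" using is_tiling_tile[OF T] t(1) s(1) by auto
  have st: "st s \<in> s" using st_in_tile[OF tile(2)] .
  show "col (st (tile_of T (SE a))) \<le> col (st (tile_of T a))"
  proof (rule ccontr)
    assume "\<not> ?thesis"
    then have lt: "col (st t) < col (st s)" using tile_of_eq[OF T] t s by auto
    then have disj: "t \<inter> s = {}" using is_tiling_disjoint[OF T t(1) s(1)] by auto
    have "NW (st s) \<noteq> a" using NW s(1) a by blast
    then have "SE a \<noteq> st s" by (metis NW_SE)
    then obtain v where v: "v \<in> s" "SE a \<in> {NE v, SE v}"
      using tile_predecessor[OF tile(2) s(2)] by metis
    have "a \<noteq> v" using t(2) v(1) disj by blast
    then have "SE a = NE v" using v(2) by (metis NW_SE insert_iff singletonD)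
    then have "col v = col a" "height v < height a"
      by (cases a; cases v; auto simp: SE_def NE_def col_def height_def)+
    then obtain u' v' where uv: "u' \<in> t" "v' \<in> s" "col u' = col (st s)" "col v' = col (st s)"
      "height v' < height u'"
      using disjoint_tiles_stay_ordered_leftwards[OF tile disj t(2) v(1), of "col (st s)"]
        lt col_st_le[OF tile(2) v(1)] by auto
    have "v' = st s" using inj_onD[OF inj_on_col_tile[OF tile(2)]] uv(2,4) st by auto
    moreover have "u' \<in> lam" "st s \<in> lam - mu"
      using is_tiling_subset[OF T] t(1) uv(1) s(1) st by blast+
    ultimately have "NW (st s) \<in> lam - mu" using NW_mem_skew_shape[OF lam mu] uv(3,5) by simp
    then show False using NW s(1) by blast
  qed
qed

lemma left_cover_expansive_iff:
  assumes "is_partition lam" "is_partition mu" "is_tiling T (lam - mu)"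
  shows "left_cover_expansive T lam mu \<longleftrightarrow> (\<forall>t\<in>T. NW (st t) \<notin> lam - mu)"
  using assms NW_st_notin_if_left_cover_expansive left_cover_expansive_if_NW_st_notin by blast

lemma right_cover_expansive_iff_left_swap:
  assumes T: "is_tiling T (lam - mu)"
  shows "right_cover_expansive T lam mu \<longleftrightarrow>
    left_cover_expansive ((`) prod.swap ` T) (prod.swap ` lam) (prod.swap ` mu)"
proof -
  have diff: "prod.swap ` lam - prod.swap ` mu = prod.swap ` (lam - mu)"
    by (simp add: image_set_diff)
  have col_st: "col (st (tile_of ((`) prod.swap ` T) (prod.swap n))) = - col (en (tile_of T n))"
    if n: "n \<in> lam - mu" for n
  proof -
    obtain t where t: "t \<in> T" "n \<in> t" using is_tiling_cover[OF T n] .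
    then have "tile_of ((`) prod.swap ` T) (prod.swap n) = prod.swap ` t"
      using tile_of_eq[OF is_tiling_swap[OF T]] by blast
    then show ?thesis
      using tile_of_eq[OF T t] st_swap_image[OF is_tiling_tile[OF T t(1)]] by simp
  qed
  have "left_cover_expansive ((`) prod.swap ` T) (prod.swap ` lam) (prod.swap ` mu) \<longleftrightarrow>
    (\<forall>n. n \<in> lam - mu \<and> SW n \<in> lam - mu \<longrightarrow>
      col (st (tile_of ((`) prod.swap ` T) (prod.swap (SW n))))
        \<le> col (st (tile_of ((`) prod.swap ` T) (prod.swap n))))"
    unfolding left_cover_expansive_def diff by (metis SE_swap swap_swap inj_image_mem_iff inj_swap)
  then show ?thesis unfolding right_cover_expansive_def by (auto simp: col_st)
qed

lemma right_cover_expansive_iff: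
  assumes "is_partition lam" "is_partition mu" "is_tiling T (lam - mu)"
  shows "right_cover_expansive T lam mu \<longleftrightarrow> (\<forall>t\<in>T. NE (en t) \<notin> lam - mu)"
proof -
  have "NW (st (prod.swap ` t)) \<notin> prod.swap ` lam - prod.swap ` mu \<longleftrightarrow> NE (en t) \<notin> lam - mu"
    if "t \<in> T" for t
    using st_swap_image[OF is_tiling_tile[OF assms(3) that]]
    by (simp add: NW_swap image_set_diff[symmetric] inj_image_mem_iff)
  then show ?thesis
    using right_cover_expansive_iff_left_swap[OF assms(3)] is_tiling_swap[OF assms(3)]
      left_cover_expansive_iff[OF is_partition_swap[OF assms(1)] is_partition_swap[OF assms(2)]]
    by (simp add: image_set_diff)
qed

theorem proposition4p1:
  assumes "is_partition lam" and "is_partition mu" and "mu \<subseteq> lam"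
    and "is_dyck_tiling T lam mu"
  shows "(left_cover_expansive T lam mu \<longleftrightarrow> (\<forall>t\<in>T. NW (st t) \<notin> lam - mu))
       \<and> (right_cover_expansive T lam mu \<longleftrightarrow> (\<forall>t\<in>T. NE (en t) \<notin> lam - mu))"
  using left_cover_expansive_iff right_cover_expansive_iff assms(1,2)
    is_tiling_if_dyck_tiling[OF assms(4)] by blast

end
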